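(* Let $\mathcal M$ be a type $\mathrm{I}_n$ factor ($n\in\mathbb N$), i.e. $\mathcal M\cong M_n(\mathbb C)$, with the trace $\tau$ satisfying $\tau(I)=n$. If $A\in\mathcal M^+$ satisfies $\tau(A)\in\mathbb N\cup\{0\}$ and $\tau(A)\geq\tau(R_A)$, then $A$ is a sum of finitely many projections.
   Context: $R_A$ denotes the range projection of $A$. *)

theory Defs
  imports "HOL-Analysis.Analysis"
begin

text \<open>M_n(C) is modelled as complex^'n^'n for a finite index type 'n (n = CARD('n));
  the trace is the library's unnormalised trace, so trace (mat 1) = n.\<close>

definition cadjoint :: "complex^'n^'n \<Rightarrow> complex^'n^'n" where
  "cadjoint A = (\<chi> i j. cnj (A $ j $ i))"

definition cinner :: "complex^'n \<Rightarrow> complex^'n \<Rightarrow> complex" where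
  "cinner x y = (\<Sum>i\<in>UNIV. cnj (x $ i) * y $ i)"

definition positive_op :: "complex^'n^'n \<Rightarrow> bool" where
  "positive_op A \<longleftrightarrow> cadjoint A = A \<and> (\<forall>x. Im (cinner x (A *v x)) = 0 \<and> 0 \<le> Re (cinner x (A *v x)))"

definition is_projection :: "complex^'n^'n \<Rightarrow> bool" where
  "is_projection P \<longleftrightarrow> P ** P = P \<and> cadjoint P = P"

definition range_projection :: "complex^'n^'n \<Rightarrow> complex^'n^'n" where
  "range_projection A = (THE P. is_projection P \<and> range ((*v) P) = range ((*v) A))"

end

(*
  Every positive A is a sum of rank-one operators |x><x| over an orthogonal family S of
  nonzero vectors, with ||x||^2 the eigenvalue of x: a maximal such family of eigenvectors
  exhausts A, because the residual is again positive and its top eigenvector would extend the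
  family. Then tau(A) is the total weight m of the family and tau(R_A) = |S| <= m.

  Such a family is split into m projections by induction on m. By averaging some x has
  ||x||^2 >= 1. Rotating x together with an orthogonal partner y (a vector of the family with
  ||y||^2 < 1, or y = 0 when |S| < m) inside their span yields a unit vector v and a vector w
  with ||w||^2 = ||x||^2 + ||y||^2 - 1 and |x><x| + |y><y| = |v><v| + |w><w|. Replacing x, y by
  w leaves a family of weight m - 1 with at most m - 1 vectors, and |v><v| is a projection.
*)
theory Submission
  imports Defs
begin

definition outer_prod :: "complex^'n \<Rightarrow> complex^'n \<Rightarrow> complex^'n^'n" where
  "outer_prod a b = (\<chi> i j. a $ i * cnj (b $ j))"

abbreviation rank_one :: "complex^'n \<Rightarrow> complex^'n^'n" where
  "rank_one x \<equiv> outer_prod x x"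

definition cnorm2 :: "complex^'n \<Rightarrow> real" where
  "cnorm2 x = Re (cinner x x)"

definition corth :: "(complex^'n) set \<Rightarrow> bool" where
  "corth S \<longleftrightarrow> (\<forall>x\<in>S. \<forall>y\<in>S. x \<noteq> y \<longrightarrow> cinner x y = 0)"

lemma cinner_add_left: "cinner (x + y) z = cinner x z + cinner y z"
  unfolding cinner_def by (simp add: distrib_right sum.distrib)

lemma cinner_add_right: "cinner z (x + y) = cinner z x + cinner z y"
  unfolding cinner_def by (simp add: distrib_left sum.distrib)

lemma cinner_diff_left: "cinner (x - y) z = cinner x z - cinner y z"
  unfolding cinner_def by (simp add: left_diff_distrib sum_subtractf)

lemma cinner_diff_right: "cinner z (x - y) = cinner z x - cinner z y"
  unfolding cinner_def by (simp add: right_diff_distrib sum_subtractf)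

lemma cinner_scale_left: "cinner (c *s x) z = cnj c * cinner x z"
  unfolding cinner_def by (simp add: sum_distrib_left mult.assoc)

lemma cinner_scale_right: "cinner z (c *s x) = c * cinner z x"
  unfolding cinner_def by (simp add: sum_distrib_left mult.left_commute)

lemma cinner_sum_right: "cinner z (sum f S) = (\<Sum>s\<in>S. cinner z (f s))"
  unfolding cinner_def by (simp add: sum_distrib_left sum_component sum.swap[of _ S])

lemma cinner_commute: "cinner y x = cnj (cinner x y)"
  unfolding cinner_def by (simp add: mult.commute)

lemma cinner_zero_left [simp]: "cinner 0 x = 0"
  unfolding cinner_def by simp

lemma cinner_zero_right [simp]: "cinner x 0 = 0"
  unfolding cinner_def by simp

lemma cinner_self: "cinner x x = of_real (cnorm2 x)"
  unfolding cnorm2_def cinner_def by (simp add: complex_eq_iff Im_sum mult.commute)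

lemma inner_eq_Re_cinner: "inner x y = Re (cinner x y)"
  unfolding inner_vec_def cinner_def by (simp add: Re_sum inner_complex_def)

lemma cnorm2_eq_norm_square: "cnorm2 x = (norm x)\<^sup>2"
  unfolding cnorm2_def by (simp add: power2_norm_eq_inner inner_eq_Re_cinner)

lemma norm_eq_1_iff_cnorm2: "norm x = 1 \<longleftrightarrow> cnorm2 x = 1"
proof -
  have "norm x \<noteq> - 1"
    using norm_ge_zero[of x] by linarith
  then show ?thesis
    by (auto simp: cnorm2_eq_norm_square power2_eq_1_iff)
qed

lemma cnorm2_nonneg: "0 \<le> cnorm2 x"
  by (simp add: cnorm2_eq_norm_square)

lemma cnorm2_eq_0_iff [simp]: "cnorm2 x = 0 \<longleftrightarrow> x = 0"
  by (simp add: cnorm2_eq_norm_square)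

lemma cnorm2_zero [simp]: "cnorm2 0 = 0"
  by simp

lemma cnorm2_orthogonal_combination:
  assumes "cinner x y = 0"
  shows "cnorm2 (of_real a *s x + of_real b *s y) = a\<^sup>2 * cnorm2 x + b\<^sup>2 * cnorm2 y"
proof -
  have "cinner y x = 0"
    using assms cinner_commute[of x y] by simp
  then have "cinner (of_real a *s x + of_real b *s y) (of_real a *s x + of_real b *s y)
      = of_real (a\<^sup>2) * cinner x x + of_real (b\<^sup>2) * cinner y y"
    by (simp add: cinner_add_left cinner_add_right cinner_scale_left cinner_scale_right
        assms power2_eq_square)
  then show ?thesis
    unfolding cnorm2_def by (simp add: cinner_self)
qed

lemma cnorm2_scale: "cnorm2 (of_real a *s x) = a\<^sup>2 * cnorm2 x"
  using cnorm2_orthogonal_combination[of x 0 a 0] by simp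

lemma corth_subset: "corth S \<Longrightarrow> T \<subseteq> S \<Longrightarrow> corth T"
  unfolding corth_def by blast

lemma corthD: "corth S \<Longrightarrow> x \<in> S \<Longrightarrow> y \<in> S \<Longrightarrow> x \<noteq> y \<Longrightarrow> cinner x y = 0"
  unfolding corth_def by blast

lemma corth_insert:
  assumes "corth T" "z \<noteq> 0" "\<forall>s\<in>T. cinner z s = 0"
  shows "corth (insert z T)" "z \<notin> T"
proof -
  show "z \<notin> T"
    using assms(2,3) cinner_self[of z] by force
  show "corth (insert z T)"
    using assms unfolding corth_def by (metis cinner_commute complex_cnj_zero insert_iff)
qed

lemma corth_sum_pick:
  assumes "finite S" "corth S" "s \<in> S"
  shows "(\<Sum>x\<in>S. g x * cinner s x) = g s * cinner s s"
proof -
  have "(\<Sum>x\<in>S. g x * cinner s x) = g s * cinner s s + (\<Sum>x\<in>S-{s}. g x * cinner s x)"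
    using assms by (simp add: sum.remove)
  also have "(\<Sum>x\<in>S-{s}. g x * cinner s x) = 0"
    using assms by (intro sum.neutral) (auto simp: corth_def)
  finally show ?thesis by simp
qed

lemma corth_sum_cinner_scale:
  assumes "finite S" "corth S" "s \<in> S"
  shows "(\<Sum>x\<in>S. cinner x s *s x) = cinner s s *s s"
proof -
  have "(\<Sum>x\<in>S. cinner x s *s x) = cinner s s *s s + (\<Sum>x\<in>S-{s}. cinner x s *s x)"
    using assms by (simp add: sum.remove)
  also have "(\<Sum>x\<in>S-{s}. cinner x s *s x) = 0"
    using assms by (intro sum.neutral) (auto simp: corth_def vec_eq_iff)
  finally show ?thesis by simp
qed

lemma outer_prod_zero_left [simp]: "outer_prod 0 b = 0"
  unfolding outer_prod_def by (simp add: vec_eq_iff)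

lemma outer_prod_mult_vec: "outer_prod a b *v y = cinner b y *s a"
  unfolding outer_prod_def cinner_def matrix_vector_mult_def
  by (simp add: vec_eq_iff sum_distrib_left mult.assoc mult.commute mult.left_commute)

lemma sum_mult_vec: "sum f S *v y = (\<Sum>s\<in>S. f s *v y)"
  by (induction S rule: infinite_finite_induct) (auto simp: matrix_vector_mult_add_rdistrib)

lemma mat_mult_vec: "mat c *v y = c *s (y::complex^'n)"
  unfolding matrix_vector_mult_def mat_def
  by (simp add: vec_eq_iff if_distrib if_distribR cong: if_cong)

lemma cadjoint_outer_prod: "cadjoint (outer_prod a b) = outer_prod b a"
  unfolding cadjoint_def outer_prod_def by (simp add: vec_eq_iff mult.commute)

lemma cadjoint_diff: "cadjoint (A - B) = cadjoint A - cadjoint B"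
  unfolding cadjoint_def by (simp add: vec_eq_iff)

lemma cadjoint_sum: "cadjoint (sum f S) = (\<Sum>s\<in>S. cadjoint (f s))"
  unfolding cadjoint_def by (simp add: vec_eq_iff sum_component)

lemma cadjoint_mat: "cadjoint (mat c) = mat (cnj c)"
  unfolding cadjoint_def mat_def by (simp add: vec_eq_iff)

lemma cadjoint_mult: "cadjoint (A ** B) = cadjoint B ** cadjoint A"
  unfolding cadjoint_def matrix_matrix_mult_def by (simp add: vec_eq_iff mult.commute)

lemma cinner_cadjoint: "cinner (M *v y) z = cinner y (cadjoint M *v z)"
proof -
  have "cinner (M *v y) z = (\<Sum>i\<in>UNIV. \<Sum>j\<in>UNIV. cnj (M$i$j) * cnj (y$j) * z$i)"
    unfolding cinner_def matrix_vector_mult_def by (simp add: sum_distrib_right)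
  also have "\<dots> = (\<Sum>j\<in>UNIV. \<Sum>i\<in>UNIV. cnj (M$i$j) * cnj (y$j) * z$i)"
    by (rule sum.swap)
  also have "\<dots> = cinner y (cadjoint M *v z)"
    unfolding cinner_def cadjoint_def matrix_vector_mult_def
    by (simp add: sum_distrib_left mult_ac)
  finally show ?thesis .
qed

lemma cinner_hermitian: "cadjoint M = M \<Longrightarrow> cinner (M *v x) y = cinner x (M *v y)"
  using cinner_cadjoint[of M x y] by simp

lemma trace_outer_prod: "trace (outer_prod a b) = cinner b a"
  unfolding trace_def outer_prod_def cinner_def by (simp add: mult.commute)

lemma trace_sum: "trace (sum f S) = (\<Sum>s\<in>S. trace (f s))"
  unfolding trace_def by (simp add: sum_component sum.swap[of _ S])

lemma rank_one_is_projection: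
  assumes "cnorm2 u = 1"
  shows "is_projection (rank_one u)"
  unfolding is_projection_def
proof
  show "rank_one u ** rank_one u = rank_one u"
    unfolding matrix_eq
    by (simp add: matrix_vector_mul_assoc[symmetric] outer_prod_mult_vec cinner_scale_right
        cinner_self assms)
qed (simp add: cadjoint_outer_prod)

lemma rank_one_rotation:
  fixes a b :: real
  assumes "a\<^sup>2 + b\<^sup>2 = 1"
  shows "rank_one (of_real a *s x + of_real b *s y) + rank_one (of_real b *s x - of_real a *s y)
         = rank_one x + rank_one y"
proof -
  have "(of_real a * x$i + of_real b * y$i) * cnj (of_real a * x$j + of_real b * y$j)
     + (of_real b * x$i - of_real a * y$i) * cnj (of_real b * x$j - of_real a * y$j)
     = of_real (a\<^sup>2 + b\<^sup>2) * (x$i * cnj (x$j) + y$i * cnj (y$j))" for i j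
    by (simp add: algebra_simps power2_eq_square)
  then show ?thesis
    using assms unfolding outer_prod_def by (simp add: vec_eq_iff)
qed

lemma unit_rotation:
  assumes xy: "cinner x y = 0" and y: "cnorm2 y \<le> 1" and x: "1 \<le> cnorm2 x"
  obtains v w where "cnorm2 v = 1" "cnorm2 w = cnorm2 x + cnorm2 y - 1"
    "rank_one v + rank_one w = rank_one x + rank_one y"
    "\<And>z. cinner x z = 0 \<Longrightarrow> cinner y z = 0 \<Longrightarrow> cinner w z = 0"
proof -
  define l where "l = cnorm2 x"
  define \<mu> where "\<mu> = cnorm2 y"
  define c where "c = (1 - \<mu>) / (l - \<mu>)"
    \<comment> \<open>the weight with \<open>c l + (1 - c) \<mu> = 1\<close>; for \<open>l = \<mu> = 1\<close> division by zero gives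
      \<open>c = 0\<close>, which still works\<close>
  have c_eq: "c * (l - \<mu>) = 1 - \<mu>"
    using x y by (cases "l = \<mu>") (auto simp: c_def l_def \<mu>_def)
  have c01: "0 \<le> c" "c \<le> 1"
    using x y by (auto simp: c_def l_def \<mu>_def divide_le_eq_1)
  define a where "a = sqrt c"
  define b where "b = sqrt (1 - c)"
  have a2: "a\<^sup>2 = c" and b2: "b\<^sup>2 = 1 - c"
    using c01 by (simp_all add: a_def b_def)
  define v where "v = of_real a *s x + of_real b *s y"
  define w where "w = of_real b *s x + of_real (- a) *s y"
  show ?thesis
  proof
    show "cnorm2 v = 1"
      using c_eq unfolding v_def cnorm2_orthogonal_combination[OF xy] a2 b2 l_def \<mu>_def
      by (simp add: algebra_simps)
    show "cnorm2 w = cnorm2 x + cnorm2 y - 1"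
      using c_eq unfolding w_def cnorm2_orthogonal_combination[OF xy] power2_minus a2 b2
        l_def \<mu>_def
      by (simp add: algebra_simps)
    have "w = of_real b *s x - of_real a *s y"
      unfolding w_def by (simp add: vec_eq_iff)
    then show "rank_one v + rank_one w = rank_one x + rank_one y"
      using rank_one_rotation[of a b x y] a2 b2 unfolding v_def by simp
    show "cinner w z = 0" if "cinner x z = 0" "cinner y z = 0" for z
      using that unfolding w_def by (simp add: cinner_add_left cinner_diff_left cinner_scale_left)
  qed
qed

lemma exists_ge_one_if_card_le_sum:
  fixes f :: "'a \<Rightarrow> real"
  assumes "finite S" "S \<noteq> {}" "real (card S) \<le> sum f S"
  obtains x where "x \<in> S" "1 \<le> f x"
proof -
  have "\<not> (\<forall>x\<in>S. f x < 1)"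
  proof
    assume "\<forall>x\<in>S. f x < 1"
    then have "sum f S < (\<Sum>x\<in>S. 1)"
      using assms(1,2) by (intro sum_strict_mono) auto
    then show False
      using assms(3) by simp
  qed
  then show ?thesis
    using that by (meson not_less)
qed

lemma exists_lt_one_if_sum_eq_card:
  fixes f :: "'a \<Rightarrow> real"
  assumes "finite S" "sum f S = real (card S)" "x \<in> S" "1 < f x"
  obtains y where "y \<in> S" "f y < 1"
proof -
  have "\<not> (\<forall>y\<in>S. 1 \<le> f y)"
  proof
    assume "\<forall>y\<in>S. 1 \<le> f y"
    then have "(\<Sum>y\<in>S. 1) < sum f S"
      using assms by (intro sum_strict_mono_ex1) auto
    then show False
      using assms(2) by simp
  qed
  then show ?thesis
    using that by (meson not_less)
qed

lemma sum_remove_two: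
  assumes "finite S" "x \<in> S" "y \<noteq> x" "y \<in> S \<or> f y = 0"
  shows "sum f S = f x + f y + sum f (S - {x, y})"
proof -
  have "sum f S = f x + sum f (S - {x})"
    using assms(1,2) by (simp add: sum.remove)
  also have "sum f (S - {x}) = f y + sum f (S - {x, y})"
  proof (cases "y \<in> S")
    case True
    then show ?thesis
      using assms by (simp add: sum.remove insert_commute Diff_insert2[symmetric])
  next
    case False
    then have "S - {x, y} = S - {x}"
      by auto
    then show ?thesis
      using False assms(4) by simp
  qed
  finally show ?thesis
    by (simp add: add.assoc)
qed

definition admissible :: "nat \<Rightarrow> (complex^'n) set \<Rightarrow> bool" where
  "admissible m S \<longleftrightarrow> finite S \<and> 0 \<notin> S \<and> corth S \<and> (\<Sum>x\<in>S. cnorm2 x) = real m \<and> card S \<le> m"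

lemma admissible_remove_unit:
  assumes "admissible (Suc m) S" "x \<in> S" "cnorm2 x = 1"
  shows "admissible m (S - {x})"
    and "(\<Sum>z\<in>S. rank_one z) = rank_one x + (\<Sum>z\<in>S - {x}. rank_one z)"
proof -
  have fin: "finite S"
    using assms(1) by (simp add: admissible_def)
  then have "card S \<noteq> 0"
    using assms(2) by auto
  then show "admissible m (S - {x})"
    using assms corth_subset[of S "S - {x}"]
    by (auto simp: admissible_def sum_diff1 card_Diff_singleton)
  show "(\<Sum>z\<in>S. rank_one z) = rank_one x + (\<Sum>z\<in>S - {x}. rank_one z)"
    using fin assms(2) by (simp add: sum.remove)
qed

lemma admissible_merge_pair:
  fixes S :: "(complex^'n) set"
  assumes adm: "admissible (Suc m) S" and x: "x \<in> S" "1 < cnorm2 x"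
    and y: "y \<in> S - {x} \<and> cnorm2 y < 1 \<or> y = 0 \<and> card S \<le> m"
  obtains u T where "cnorm2 u = 1" "admissible m T"
    "(\<Sum>z\<in>S. rank_one z) = rank_one u + (\<Sum>z\<in>T. rank_one z)"
proof -
  have fin: "finite S" and nz: "0 \<notin> S" and orth: "corth S" and sum: "(\<Sum>z\<in>S. cnorm2 z) = Suc m"
    using adm by (auto simp: admissible_def)
  define R where "R = S - {x, y}"
  have yx: "y \<noteq> x" "y \<in> S \<or> y = 0"
    using x y nz by auto
  have xy: "cinner x y = 0"
    using y corthD[OF orth x(1)] by auto
  have y_le: "cnorm2 y \<le> 1"
    using y by auto
  obtain v w where v: "cnorm2 v = 1" and w: "cnorm2 w = cnorm2 x + cnorm2 y - 1"
    and rot: "rank_one v + rank_one w = rank_one x + rank_one y"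
    and w_orth: "\<And>z. cinner x z = 0 \<Longrightarrow> cinner y z = 0 \<Longrightarrow> cinner w z = 0"
    using unit_rotation[OF xy y_le less_imp_le[OF x(2)]] by blast
  have w_nz: "w \<noteq> 0"
    using w x(2) cnorm2_nonneg[of y] by auto
  moreover have "\<forall>z\<in>R. cinner w z = 0"
    using w_orth corthD[OF orth] x(1) yx(2) unfolding R_def by fastforce
  moreover have "corth R"
    using orth corth_subset unfolding R_def by blast
  ultimately have orth_T: "corth (insert w R)" and w_notin: "w \<notin> R"
    using corth_insert by blast+
  have split: "sum f S = f x + f y + sum f R" if "f 0 = 0" for f :: "complex^'n \<Rightarrow> 'b::comm_monoid_add"
    unfolding R_def using sum_remove_two[OF fin x(1) yx(1)] yx(2) that by auto
  have card_R: "Suc (card R) \<le> m"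
  proof (cases "y \<in> S")
    case True
    then have "{x, y} \<subseteq> S"
      using x(1) by blast
    then have "card R = card S - 2" "2 \<le> card S"
      using fin yx(1) card_mono[of S "{x, y}"] by (auto simp: R_def card_Diff_subset)
    then show ?thesis
      using adm unfolding admissible_def by linarith
  next
    case False
    then have "R = S - {x}" "card S \<le> m"
      using y unfolding R_def by auto
    then show ?thesis
      using fin x(1) card_gt_0_iff[of S] by (auto simp: card_Diff_singleton)
  qed
  show ?thesis
  proof
    show "cnorm2 v = 1" by (fact v)
    show "admissible m (insert w R)"
      using fin nz w_nz orth_T w_notin card_R split[of cnorm2] sum w
      by (auto simp: admissible_def R_def)
    show "(\<Sum>z\<in>S. rank_one z) = rank_one v + (\<Sum>z\<in>insert w R. rank_one z)"
      using split[of rank_one] rot fin w_notin by (simp add: R_def flip: add.assoc)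
  qed
qed

lemma admissible_Suc_split:
  assumes adm: "admissible (Suc m) S"
  obtains u T where "cnorm2 u = 1" "admissible m T"
    "(\<Sum>z\<in>S. rank_one z) = rank_one u + (\<Sum>z\<in>T. rank_one z)"
proof -
  have fin: "finite S" and sum: "(\<Sum>z\<in>S. cnorm2 z) = Suc m" and card: "card S \<le> Suc m"
    using adm by (auto simp: admissible_def)
  then have "S \<noteq> {}"
    by auto
  then obtain x where x: "x \<in> S" "1 \<le> cnorm2 x"
    using exists_ge_one_if_card_le_sum[OF fin] sum card by (metis of_nat_le_iff)
  show ?thesis
  proof (cases "cnorm2 x = 1")
    case True
    then show ?thesis
      using that admissible_remove_unit[OF adm x(1)] by blast
  next
    case False
    with x have big: "1 < cnorm2 x"
      by simp
    obtain y where "y \<in> S - {x} \<and> cnorm2 y < 1 \<or> y = 0 \<and> card S \<le> m"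
    proof (cases "card S \<le> m")
      case False
      then have "(\<Sum>z\<in>S. cnorm2 z) = real (card S)"
        using sum card by simp
      then obtain y where "y \<in> S" "cnorm2 y < 1"
        using exists_lt_one_if_sum_eq_card[of S cnorm2 x] fin x(1) big by blast
      then show ?thesis
        using that[of y] big by force
    qed (use that[of 0] in simp)
    then show ?thesis
      using admissible_merge_pair[OF adm x(1) big] that by blast
  qed
qed

lemma admissible_sum_projections:
  "admissible m S \<Longrightarrow>
    \<exists>Ps. (\<forall>P\<in>set Ps. is_projection P) \<and> (\<Sum>x\<in>S. rank_one x) = sum_list Ps"
proof (induction m arbitrary: S)
  case 0
  then have "finite S" "card S = 0"
    by (auto simp: admissible_def)
  then have "S = {}"
    by simp
  then show ?case
    by (intro exI[of _ "[]"]) simp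
next
  case (Suc m)
  obtain u T where u: "cnorm2 u = 1" and T: "admissible m T"
    and S: "(\<Sum>z\<in>S. rank_one z) = rank_one u + (\<Sum>z\<in>T. rank_one z)"
    using admissible_Suc_split[OF Suc.prems] by blast
  obtain Ps where "\<forall>P\<in>set Ps. is_projection P" "(\<Sum>z\<in>T. rank_one z) = sum_list Ps"
    using Suc.IH[OF T] by blast
  then show ?case
    using S rank_one_is_projection[OF u] by (intro exI[of _ "rank_one u # Ps"]) simp
qed

definition qform :: "complex^'n^'n \<Rightarrow> complex^'n \<Rightarrow> real" where
  "qform M y = Re (cinner y (M *v y))"

lemma qform_scale: "qform M (of_real r *s y) = r\<^sup>2 * qform M y"
  unfolding qform_def
  by (simp add: vector_scalar_commute cinner_scale_left cinner_scale_right power2_eq_square)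

lemma continuous_on_qform: "continuous_on X (qform M)"
  unfolding qform_def cinner_def matrix_vector_mult_def
  by (auto intro!: continuous_intros)

lemma qform_hermitian_add:
  assumes "cadjoint C = C"
  shows "qform C (x + of_real t *s y) = qform C x + 2 * t * Re (cinner y (C *v x)) + t\<^sup>2 * qform C y"
proof -
  have "cinner x (C *v y) = cnj (cinner y (C *v x))"
    using cinner_hermitian[OF assms, of x y] cinner_commute[of "C *v x" y] by simp
  then have "Re (cinner x (C *v y)) = Re (cinner y (C *v x))"
    by simp
  then show ?thesis
    unfolding qform_def
    by (simp add: matrix_vector_right_distrib vector_scalar_commute cinner_add_left cinner_add_right
        cinner_scale_left cinner_scale_right power2_eq_square algebra_simps)
qed

lemma quadratic_nonneg_imp_linear_coeff_0:
  fixes r p :: real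
  assumes nonneg: "\<And>t. 0 \<le> 2 * t * r + t\<^sup>2 * p"
  shows "r = 0"
proof (rule ccontr)
  assume "r \<noteq> 0"
  have p: "0 \<le> p"
    using nonneg[of 1] nonneg[of "-1"] by simp
  define t where "t = - r / (p + 1)"
  have r_eq: "r = - t * (p + 1)"
    using p by (simp add: t_def)
  have "t \<noteq> 0"
    using \<open>r \<noteq> 0\<close> p by (simp add: t_def)
  then have "0 < t\<^sup>2 * (p + 2)"
    using p by simp
  moreover have "2 * t * r + t\<^sup>2 * p = - (t\<^sup>2 * (p + 2))"
    unfolding r_eq by (simp add: power2_eq_square algebra_simps)
  ultimately show False
    using nonneg[of t] by linarith
qed

lemma psd_qform_eq_0_imp_kernel:
  assumes herm: "cadjoint C = C" and psd: "\<And>y. 0 \<le> qform C y" and x: "qform C x = 0"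
  shows "C *v x = 0"
proof -
  have "0 \<le> 2 * t * cnorm2 (C *v x) + t\<^sup>2 * qform C (C *v x)" for t
    using psd[of "x + of_real t *s (C *v x)"]
    by (simp add: qform_hermitian_add[OF herm] x cnorm2_def)
  then have "cnorm2 (C *v x) = 0"
    by (rule quadratic_nonneg_imp_linear_coeff_0)
  then show ?thesis
    by simp
qed

text \<open>The maximum of the quadratic form on the unit sphere is an eigenvalue.\<close>
lemma psd_hermitian_eigenvector:
  assumes herm: "cadjoint B = B" and psd: "\<And>y. 0 \<le> qform B y" and nz: "B \<noteq> 0"
  obtains z \<mu> where "0 < \<mu>" "cnorm2 z = 1" "B *v z = of_real \<mu> *s z"
proof -
  have "\<exists>y. qform B y \<noteq> 0"
  proof (rule ccontr)
    assume "\<not> ?thesis"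
    then have "B *v y = 0 *v y" for y
      using psd_qform_eq_0_imp_kernel[OF herm psd] by simp
    then show False
      using nz matrix_eq by blast
  qed
  then obtain y0 where "qform B y0 \<noteq> 0"
    by blast
  with psd[of y0] have y0: "0 < qform B y0"
    by linarith
  then have "y0 \<noteq> 0"
    by (auto simp: qform_def)
  have unit: "of_real (1 / norm y) *s y \<in> sphere 0 1" if "y \<noteq> 0" for y :: "complex^'n"
  proof -
    have "cnorm2 (of_real (1 / norm y) *s y) = (1 / norm y)\<^sup>2 * (norm y)\<^sup>2"
      using cnorm2_scale[of "1 / norm y" y] cnorm2_eq_norm_square[of y] by simp
    then show ?thesis
      using that by (simp add: norm_eq_1_iff_cnorm2 power_divide)
  qed
  obtain z where z: "z \<in> sphere 0 1" and zmax: "\<And>y. y \<in> sphere 0 1 \<Longrightarrow> qform B y \<le> qform B z"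
    using continuous_attains_sup[OF compact_sphere _ continuous_on_qform] unit[OF \<open>y0 \<noteq> 0\<close>]
    by blast
  define \<mu> where "\<mu> = qform B z"
  have bound: "qform B y \<le> \<mu> * cnorm2 y" for y
  proof (cases "y = 0")
    case False
    have "(1 / norm y)\<^sup>2 * qform B y \<le> \<mu>"
      using zmax[OF unit[OF False]] unfolding qform_scale \<mu>_def .
    then show ?thesis
      using False by (simp add: cnorm2_eq_norm_square field_simps)
  qed (simp add: qform_def)
  have "0 < \<mu>"
    using bound[of y0] y0 cnorm2_nonneg[of y0] by (smt (verit) mult_nonpos_nonneg)
  define C where "C = mat (of_real \<mu>) - B"
  have "cadjoint C = C"
    unfolding C_def cadjoint_diff cadjoint_mat herm by simp
  moreover have qC: "qform C y = \<mu> * cnorm2 y - qform B y" for y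
    unfolding C_def qform_def matrix_vector_mult_diff_rdistrib mat_mult_vec
    by (simp add: cinner_diff_right cinner_scale_right cinner_self)
  moreover have "cnorm2 z = 1"
    using z by (simp add: norm_eq_1_iff_cnorm2)
  ultimately have "C *v z = 0"
    using bound by (intro psd_qform_eq_0_imp_kernel) (auto simp: \<mu>_def)
  then have "B *v z = of_real \<mu> *s z"
    unfolding C_def matrix_vector_mult_diff_rdistrib mat_mult_vec by simp
  then show ?thesis
    using that \<open>0 < \<mu>\<close> \<open>cnorm2 z = 1\<close> by blast
qed

definition eigen_family :: "complex^'n^'n \<Rightarrow> (complex^'n) set \<Rightarrow> bool" where
  "eigen_family A S \<longleftrightarrow>
    finite S \<and> 0 \<notin> S \<and> corth S \<and> (\<forall>x\<in>S. A *v x = of_real (cnorm2 x) *s x)"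

lemma eigen_family_card_le:
  fixes S :: "(complex^'n) set"
  assumes "eigen_family A S"
  shows "card S \<le> DIM(complex^'n)"
proof -
  have "pairwise orthogonal S"
    using assms unfolding eigen_family_def corth_def pairwise_def orthogonal_def inner_eq_Re_cinner
    by auto
  then have "independent S"
    using assms pairwise_orthogonal_independent unfolding eigen_family_def by blast
  then show ?thesis
    using independent_bound by blast
qed

lemma exists_maximal_eigen_family:
  obtains S where "eigen_family A S" "\<And>T. eigen_family A T \<Longrightarrow> card T \<le> card S"
proof -
  let ?K = "card ` {S. eigen_family A S}"
  have "finite ?K"
    by (rule finite_subset[of _ "{..DIM(complex^'n)}"]) (auto dest: eigen_family_card_le)
  moreover have "{} \<in> {S. eigen_family A S}"
    by (simp add: eigen_family_def corth_def)
  ultimately have "Max ?K \<in> ?K" "\<forall>k\<in>?K. k \<le> Max ?K"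
    by (auto intro: Max_in)
  then show ?thesis
    using that by force
qed

text \<open>For nonnegativity, \<open>y\<close> is replaced by its component \<open>w\<close> orthogonal to the family, on
  which the residual acts as \<open>A\<close>.\<close>
lemma eigen_family_residual:
  assumes pos: "positive_op A" and fam: "eigen_family A S"
  defines "B \<equiv> A - (\<Sum>x\<in>S. rank_one x)"
  shows "cadjoint B = B"
    and residual_kernel: "\<And>x. x \<in> S \<Longrightarrow> B *v x = 0"
    and residual_orth: "\<And>z. \<forall>x\<in>S. cinner x z = 0 \<Longrightarrow> B *v z = A *v z"
    and "\<And>y. 0 \<le> qform B y"
proof -
  have fin: "finite S" and nz: "0 \<notin> S" and orth: "corth S"
    and eig: "\<And>x. x \<in> S \<Longrightarrow> A *v x = of_real (cnorm2 x) *s x"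
    using fam unfolding eigen_family_def by auto
  have herm_A: "cadjoint A = A" and psd_A: "\<And>y. 0 \<le> qform A y"
    using pos unfolding positive_op_def qform_def by auto
  show herm: "cadjoint B = B"
    unfolding B_def cadjoint_diff cadjoint_sum cadjoint_outer_prod herm_A ..
  have B: "B *v y = A *v y - (\<Sum>x\<in>S. cinner x y *s x)" for y
    unfolding B_def matrix_vector_mult_diff_rdistrib sum_mult_vec outer_prod_mult_vec ..
  show kernel: "B *v x = 0" if "x \<in> S" for x
    unfolding B corth_sum_cinner_scale[OF fin orth that] eig[OF that] by (simp add: cinner_self)
  show orth_eq: "B *v z = A *v z" if "\<forall>x\<in>S. cinner x z = 0" for z
    using that unfolding B by (simp add: vec_eq_iff)
  show "0 \<le> qform B y" for y
  proof -
    define w where "w = y - (\<Sum>x\<in>S. (cinner x y / cinner x x) *s x)"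
    have w_orth: "cinner s w = 0" if s: "s \<in> S" for s
    proof -
      have "cinner s s \<noteq> 0"
        using s nz by (auto simp: cinner_self)
      moreover have "cinner s w = cinner s y - (\<Sum>x\<in>S. (cinner x y / cinner x x) * cinner s x)"
        unfolding w_def by (simp add: cinner_diff_right cinner_sum_right cinner_scale_right)
      ultimately show ?thesis
        unfolding corth_sum_pick[OF fin orth s] by simp
    qed
    have "B *v w = B *v y - (\<Sum>x\<in>S. (cinner x y / cinner x x) *s (B *v x))"
      unfolding w_def matrix_vector_mult_diff_distrib linear_sum[OF matrix_vector_mul_linear]
        vector_scalar_commute ..
    then have Bw: "B *v w = B *v y"
      using kernel by simp
    have "qform B y = Re (cinner y (B *v w))"
      unfolding qform_def Bw ..
    also have "\<dots> = Re (cinner (B *v w) w)"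
      unfolding cinner_hermitian[OF herm] Bw ..
    also have "\<dots> = qform A w"
      using cinner_hermitian[OF herm, of w w] orth_eq[of w] w_orth by (simp add: qform_def)
    finally show ?thesis
      using psd_A[of w] by simp
  qed
qed

lemma eigen_family_extend:
  assumes pos: "positive_op A" and fam: "eigen_family A S"
    and ne: "A \<noteq> (\<Sum>x\<in>S. rank_one x)"
  obtains z where "z \<notin> S" "eigen_family A (insert z S)"
proof -
  define B where "B = A - (\<Sum>x\<in>S. rank_one x)"
  note residual = eigen_family_residual[OF pos fam, folded B_def]
  have "B \<noteq> 0"
    using ne by (simp add: B_def)
  obtain z \<mu> where \<mu>: "0 < \<mu>" and z: "cnorm2 z = 1" and Bz: "B *v z = of_real \<mu> *s z"
    using psd_hermitian_eigenvector[OF residual(1,4) \<open>B \<noteq> 0\<close>] by blast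
  have z_orth: "cinner x z = 0" if "x \<in> S" for x
  proof -
    have "of_real \<mu> * cinner x z = cinner (B *v x) z"
      using cinner_hermitian[OF residual(1), of x z] by (simp add: Bz cinner_scale_right)
    then show ?thesis
      using residual(2)[OF that] \<mu> by simp
  qed
  define z' where "z' = of_real (sqrt \<mu>) *s z"
  have z': "cnorm2 z' = \<mu>"
    using \<mu> z by (simp add: z'_def cnorm2_scale)
  have "A *v z = of_real \<mu> *s z"
    using residual(3)[of z] z_orth Bz by simp
  then have "A *v z' = of_real (cnorm2 z') *s z'"
    unfolding z' unfolding z'_def vector_scalar_commute by (simp add: vector_smult_assoc mult.commute)
  moreover have "z' \<noteq> 0"
    using z' \<mu> by auto
  moreover have "\<forall>s\<in>S. cinner z' s = 0"
    using z_orth cinner_commute[of _ z] by (simp add: z'_def cinner_scale_left)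
  ultimately show ?thesis
    using that[of z'] corth_insert[of S z'] fam unfolding eigen_family_def by auto
qed

lemma positive_op_rank_one_decomposition:
  assumes "positive_op A"
  obtains S where "finite S" "0 \<notin> S" "corth S" "A = (\<Sum>x\<in>S. rank_one x)"
proof -
  obtain S where S: "eigen_family A S" and max: "\<And>T. eigen_family A T \<Longrightarrow> card T \<le> card S"
    using exists_maximal_eigen_family by blast
  have "A = (\<Sum>x\<in>S. rank_one x)"
  proof (rule ccontr)
    assume "A \<noteq> (\<Sum>x\<in>S. rank_one x)"
    then obtain z where "z \<notin> S" "eigen_family A (insert z S)"
      using eigen_family_extend[OF assms S] by blast
    then have "card (insert z S) \<le> card S"
      using max by blast
    then show False
      using \<open>z \<notin> S\<close> S by (simp add: eigen_family_def)
  qed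
  then show ?thesis
    using that S unfolding eigen_family_def by blast
qed

definition spectral_sum :: "(complex^'n) set \<Rightarrow> (complex^'n \<Rightarrow> real) \<Rightarrow> complex^'n^'n" where
  "spectral_sum S f = (\<Sum>x\<in>S. outer_prod (of_real (f x) *s x) x)"

lemma spectral_sum_mult_vec: "spectral_sum S f *v y = (\<Sum>x\<in>S. (of_real (f x) * cinner x y) *s x)"
  unfolding spectral_sum_def sum_mult_vec outer_prod_mult_vec
  by (simp add: vector_smult_assoc mult.commute)

lemma spectral_sum_mult:
  assumes "finite S" "corth S"
  shows "spectral_sum S f ** spectral_sum S g = spectral_sum S (\<lambda>x. f x * g x * cnorm2 x)"
  unfolding matrix_eq
proof
  fix y
  have "(spectral_sum S f ** spectral_sum S g) *v y
      = (\<Sum>x\<in>S. (of_real (f x) * (\<Sum>z\<in>S. (of_real (g z) * cinner z y) * cinner x z)) *s x)"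
    by (simp add: matrix_vector_mul_assoc[symmetric] spectral_sum_mult_vec cinner_sum_right
        cinner_scale_right)
  also have "\<dots> = (\<Sum>x\<in>S. (of_real (f x * g x * cnorm2 x) * cinner x y) *s x)"
  proof (rule sum.cong[OF refl])
    fix x
    assume "x \<in> S"
    then have "(\<Sum>z\<in>S. (of_real (g z) * cinner z y) * cinner x z) = (of_real (g x) * cinner x y) * cinner x x"
      by (rule corth_sum_pick[OF assms])
    then show "(of_real (f x) * (\<Sum>z\<in>S. (of_real (g z) * cinner z y) * cinner x z)) *s x
        = (of_real (f x * g x * cnorm2 x) * cinner x y) *s x"
      by (simp add: cinner_self mult_ac)
  qed
  also have "\<dots> = spectral_sum S (\<lambda>x. f x * g x * cnorm2 x) *v y"
    by (simp add: spectral_sum_mult_vec)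
  finally show "(spectral_sum S f ** spectral_sum S g) *v y
      = spectral_sum S (\<lambda>x. f x * g x * cnorm2 x) *v y" .
qed

lemma spectral_sum_cong: "(\<And>x. x \<in> S \<Longrightarrow> f x = g x) \<Longrightarrow> spectral_sum S f = spectral_sum S g"
  unfolding spectral_sum_def by simp

lemma spectral_sum_one: "spectral_sum S (\<lambda>_. 1) = (\<Sum>x\<in>S. rank_one x)"
  unfolding spectral_sum_def by simp

lemma cadjoint_spectral_sum: "cadjoint (spectral_sum S f) = spectral_sum S f"
  unfolding spectral_sum_def cadjoint_sum cadjoint_outer_prod
  by (rule sum.cong) (auto simp: outer_prod_def vec_eq_iff)

lemma trace_spectral_sum: "trace (spectral_sum S f) = (\<Sum>x\<in>S. of_real (f x * cnorm2 x))"
  unfolding spectral_sum_def trace_sum trace_outer_prod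
  by (simp add: cinner_scale_right cinner_self)

lemma range_mult_vec_subset: "M ** N = K \<Longrightarrow> range ((*v) K) \<subseteq> range ((*v) M)"
  by (auto simp flip: matrix_vector_mul_assoc)

lemma projection_eq_if_range_eq:
  assumes "is_projection P" "is_projection Q" "range ((*v) P) = range ((*v) Q)"
  shows "P = Q"
proof -
  have P: "P ** P = P" "cadjoint P = P" and Q: "Q ** Q = Q" "cadjoint Q = Q"
    using assms(1,2) unfolding is_projection_def by auto
  have absorb: "M ** N = N"
    if idem: "M ** M = M" and rng: "range ((*v) N) \<subseteq> range ((*v) M)" for M N :: "complex^'n^'n"
    unfolding matrix_eq
  proof
    fix y
    obtain z where "N *v y = M *v z"
      using rng by auto
    then show "(M ** N) *v y = N *v y"
      by (metis idem matrix_vector_mul_assoc)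
  qed
  have "P = cadjoint (Q ** P)"
    using absorb[OF Q(1)] assms(3) P(2) by simp
  also have "\<dots> = P ** Q"
    by (simp add: cadjoint_mult P Q)
  also have "\<dots> = Q"
    using absorb[OF P(1)] assms(3) by simp
  finally show ?thesis .
qed

text \<open>The ranges of \<open>A\<close> and \<open>P\<close> agree because each factors through the other: \<open>A = P A\<close>, and
  \<open>P = A Q\<close> for the weights \<open>1 / \<parallel>x\<parallel>\<^sup>4\<close>.\<close>
lemma range_projection_rank_one_sum:
  assumes fin: "finite S" and orth: "corth S" and nz: "0 \<notin> S"
  shows "range_projection (\<Sum>x\<in>S. rank_one x) = spectral_sum S (\<lambda>x. 1 / cnorm2 x)"
proof -
  let ?A = "\<Sum>x\<in>S. rank_one x" and ?P = "spectral_sum S (\<lambda>x. 1 / cnorm2 x)"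
  have A: "?A = spectral_sum S (\<lambda>_. 1)"
    by (simp add: spectral_sum_one)
  have "?P ** ?P = ?P"
    unfolding spectral_sum_mult[OF fin orth] by (rule spectral_sum_cong) (use nz in auto)
  then have proj: "is_projection ?P"
    unfolding is_projection_def using cadjoint_spectral_sum by auto
  have PA: "?P ** ?A = ?A"
    unfolding A spectral_sum_mult[OF fin orth] by (rule spectral_sum_cong) (use nz in auto)
  have AQ: "?A ** spectral_sum S (\<lambda>x. 1 / (cnorm2 x)\<^sup>2) = ?P"
    unfolding A spectral_sum_mult[OF fin orth]
    by (rule spectral_sum_cong) (use nz in \<open>auto simp: power2_eq_square\<close>)
  have rng: "range ((*v) ?P) = range ((*v) ?A)"
    using range_mult_vec_subset[OF AQ] range_mult_vec_subset[OF PA] by blast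
  show ?thesis
    unfolding range_projection_def
  proof (rule the_equality)
    show "is_projection ?P \<and> range ((*v) ?P) = range ((*v) ?A)"
      using proj rng by blast
    show "P = ?P" if "is_projection P \<and> range ((*v) P) = range ((*v) ?A)" for P
      using that proj rng by (intro projection_eq_if_range_eq) auto
  qed
qed

theorem theorem5p1:
  fixes A :: "complex^'n^'n"
  assumes "positive_op A"
    and "\<exists>k::nat. trace A = of_nat k"
    and "Re (trace (range_projection A)) \<le> Re (trace A)"
  shows "\<exists>Ps :: (complex^'n^'n) list. (\<forall>P\<in>set Ps. is_projection P) \<and> A = sum_list Ps"
proof -
  obtain S where fin: "finite S" and nz: "0 \<notin> S" and orth: "corth S"
    and A: "A = (\<Sum>x\<in>S. rank_one x)"
    using positive_op_rank_one_decomposition[OF assms(1)] by blast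
  obtain k where k: "trace A = of_nat k"
    using assms(2) by blast
  have "trace A = of_real (\<Sum>x\<in>S. cnorm2 x)"
    unfolding A trace_sum trace_outer_prod by (simp add: cinner_self)
  with k have sum: "(\<Sum>x\<in>S. cnorm2 x) = real k"
    by (metis of_real_eq_iff of_real_of_nat_eq)
  have "trace (range_projection A) = (\<Sum>x\<in>S. 1)"
    unfolding A range_projection_rank_one_sum[OF fin orth nz] trace_spectral_sum
    using nz by (intro sum.cong) auto
  then have "card S \<le> k"
    using assms(3) k by simp
  then have "admissible k S"
    unfolding admissible_def using fin nz orth sum by blast
  then show ?thesis
    using admissible_sum_projections A by simp
qed

end
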